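(* Let $n\geq 1$ and $N=n(n-1)/2$. For a graph $\Delta$ with vertex set $\{1,\dots,n\}$ let $\Delta^c$ be its complement in the complete graph $K_n$ (same vertex set, complementary edge set). The map $[\Delta]\mapsto[\Delta^c]$ on isomorphism classes induces, via $\alpha_{\mathcal{D}}\mapsto\alpha_{\mathcal{D}^c}$ (resp. $\alpha^{\mathrm{sgn}}_{\mathcal D}\mapsto\alpha^{\mathrm{sgn}}_{\mathcal D^c}$, $\alpha^{\mathrm{sgn}}_{\mathcal D}\mapsto\alpha_{\mathcal D^c}$), the following linear isomorphisms for every $0\le r\le N$: (1) if $n$ is even, $H^r(\Gamma_n;\mathbb{Q})\to H^{N-r}(\Gamma_n;\mathbb{Q})$; (2) if $n$ is even, $H^r(\Gamma_n;\mathbb{Q}_{\mathrm{sgn}})\to H^{N-r}(\Gamma_n;\mathbb{Q}_{\mathrm{sgn}})$; (3) if $n$ is odd, $H^r(\Gamma_n;\mathbb{Q}_{\mathrm{sgn}})\to H^{N-r}(\Gamma_n;\mathbb{Q})$.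
   Context: $\mathrm{Br}_n$ is the braid group on $n$ strands, $P_n$ the pure braid group, $S_n=\mathrm{Br}_n/P_n$, $\Gamma_n=\mathrm{Br}_n/[P_n,P_n]$, and $\mathbb{Z}\mathcal{A}_n=P_n/[P_n,P_n]\cong\mathbb{Z}^{n(n-1)/2}$, a normal subgroup of $\Gamma_n$ with quotient $S_n$. $H^\bullet(\mathbb{Z}\mathcal{A}_n;\mathbb{Q})$ is the exterior algebra on classes $\omega_{ij}$, $1\le i<j\le n$ (corresponding to $d\log(z_i-z_j)$), and $\sigma\in S_n$ acts by the algebra automorphism with $\sigma(\omega_{ij})=\omega_{\sigma(i)\sigma(j)}$ if $\sigma(i)<\sigma(j)$ and $\omega_{\sigma(j)\sigma(i)}$ otherwise. $\mathbb{Q}_{\mathrm{sgn}}$ is the sign representation of $S_n$, viewed as a $\Gamma_n$-module via $\Gamma_n\to S_n$; $H^\bullet(\mathbb{Z}\mathcal{A}_n;\mathbb{Q}_{\mathrm{sgn}})=\mathbb{Q}_{\mathrm{sgn}}\otimes H^\bullet(\mathbb{Z}\mathcal{A}_n;\mathbb{Q})$ as $S_n$-modules. For $M=\mathbb{Q}$ or $\mathbb{Q}_{\mathrm{sgn}}$, $H^\bullet(\Gamma_n;M)$ is identified (via restriction) with $H^\bullet(\mathbb{Z}\mathcal{A}_n;M)^{S_n}$. Graphs are finite simple graphs. For a graph $\Delta$ on vertex set $\{1,\dots,n\}$ with edges $(i_1,j_1),\dots,(i_k,j_k)$ ($i_t<j_t$) in lexicographic order, $\mu_\Delta=\omega_{i_1j_1}\cdots\omega_{i_kj_k}$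 (in either coefficient module). For an automorphism $\sigma$ of $\Delta$, $\mathrm{sgn}(\sigma)$ is its sign as a permutation of vertices and $\mathrm{sgn}_\Delta(\sigma)$ the sign of the induced permutation of edges. $\Delta$ is invariant if $\mathrm{sgn}_\Delta(\sigma)=1$ for all automorphisms $\sigma$, and skew-invariant if $\mathrm{sgn}(\sigma)\mathrm{sgn}_\Delta(\sigma)=1$ for all automorphisms $\sigma$. For an isomorphism class $\mathcal D$ of graphs on $n$ vertices choose a representative $\Delta_{\mathcal D}$ with vertex set $\{1,\dots,n\}$ and set $\alpha_{\mathcal D}=\frac{1}{|\mathrm{Stab}_{S_n}(\Delta_{\mathcal D})|}\sum_{\sigma\in S_n}\sigma(\mu_{\Delta_{\mathcal D}})\in H^\bullet(\mathbb{Z}\mathcal{A}_n;\mathbb{Q})$ and $\alpha^{\mathrm{sgn}}_{\mathcal D}$ by the same formula in $H^\bullet(\mathbb{Z}\mathcal{A}_n;\mathbb{Q}_{\mathrm{sgn}})$. The classes $\alpha_{\mathcal D}$ for invariant $\mathcal D$ form a basis of $H^\bullet(\Gamma_n;\mathbb{Q})$ and the $\alpha^{\mathrm{sgn}}_{\mathcal D}$ for skew-invariant $\mathcal D$ a basis of $H^\bullet(\Gamma_n;\mathbb{Q}_{\mathrm{sgn}})$; $\alpha_{\mathcal D}$ has degree equal to the number of edges. *)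

theory Defs
  imports Complex_Main "HOL-Combinatorics.Permutations"
begin

type_synonym edge = "nat \<times> nat"
type_synonym grph = "edge set"
(* elements of H^*(ZA_n;Q) (exterior algebra on the omega_ij): coefficient functions
   on edge sets; the basis monomial mu_E corresponds to the edge set E *)
type_synonym ext = "grph \<Rightarrow> rat"

definition edges :: "nat \<Rightarrow> grph" where
  "edges n = {(i,j). 1 \<le> i \<and> i < j \<and> j \<le> n}"

definition perms :: "nat \<Rightarrow> (nat \<Rightarrow> nat) set" where
  "perms n = {\<sigma>. \<sigma> permutes {1..n}}"

definition edge_act :: "(nat \<Rightarrow> nat) \<Rightarrow> edge \<Rightarrow> edge" where
  "edge_act \<sigma> e = (if \<sigma> (fst e) < \<sigma> (snd e) then (\<sigma> (fst e), \<sigma> (snd e))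
                      else (\<sigma> (snd e), \<sigma> (fst e)))"

definition lex_less :: "edge \<Rightarrow> edge \<Rightarrow> bool" where
  "lex_less e e' = (fst e < fst e' \<or> (fst e = fst e' \<and> snd e < snd e'))"

(* number of inversions created when sigma is applied to the lexicographically
   ordered product mu_E; sigma(mu_E) = (-1)^inv_count * mu_{sigma E} *)
definition inv_count :: "(nat \<Rightarrow> nat) \<Rightarrow> grph \<Rightarrow> nat" where
  "inv_count \<sigma> E = card {(e,e'). e \<in> E \<and> e' \<in> E \<and> lex_less e e'
                         \<and> lex_less (edge_act \<sigma> e') (edge_act \<sigma> e)}"

definition mu :: "grph \<Rightarrow> ext" where
  "mu E = (\<lambda>S. if S = E then 1 else 0)"

definition act :: "nat \<Rightarrow> (nat \<Rightarrow> nat) \<Rightarrow> ext \<Rightarrow> ext" where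
  "act n \<sigma> v = (\<lambda>S. \<Sum>E\<in>Pow (edges n).
      if edge_act \<sigma> ` E = S then (-1) ^ inv_count \<sigma> E * v E else 0)"

(* the S_n action on H^*(ZA_n;Q_sgn) = Q_sgn (x) H^*(ZA_n;Q) *)
definition act_sgn :: "nat \<Rightarrow> (nat \<Rightarrow> nat) \<Rightarrow> ext \<Rightarrow> ext" where
  "act_sgn n \<sigma> v = (\<lambda>S. of_int (sign \<sigma>) * act n \<sigma> v S)"

definition ext_deg :: "nat \<Rightarrow> nat \<Rightarrow> ext set" where
  "ext_deg n r = {v. \<forall>S. v S \<noteq> 0 \<longrightarrow> S \<subseteq> edges n \<and> card S = r}"

(* H^r(Gamma_n;Q) = H^r(ZA_n;Q)^{S_n} and H^r(Gamma_n;Q_sgn) *)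
definition H :: "nat \<Rightarrow> nat \<Rightarrow> ext set" where
  "H n r = {v \<in> ext_deg n r. \<forall>\<sigma>\<in>perms n. act n \<sigma> v = v}"

definition Hsgn :: "nat \<Rightarrow> nat \<Rightarrow> ext set" where
  "Hsgn n r = {v \<in> ext_deg n r. \<forall>\<sigma>\<in>perms n. act_sgn n \<sigma> v = v}"

definition stab :: "nat \<Rightarrow> grph \<Rightarrow> (nat \<Rightarrow> nat) set" where
  "stab n E = {\<sigma> \<in> perms n. edge_act \<sigma> ` E = E}"

definition alpha :: "nat \<Rightarrow> grph \<Rightarrow> ext" where
  "alpha n E = (\<lambda>S. (1 / of_nat (card (stab n E))) * (\<Sum>\<sigma>\<in>perms n. act n \<sigma> (mu E) S))"

definition alpha_sgn :: "nat \<Rightarrow> grph \<Rightarrow> ext" where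
  "alpha_sgn n E = (\<lambda>S. (1 / of_nat (card (stab n E))) * (\<Sum>\<sigma>\<in>perms n. act_sgn n \<sigma> (mu E) S))"

definition graph_iso :: "nat \<Rightarrow> grph \<Rightarrow> grph \<Rightarrow> bool" where
  "graph_iso n E E' = (\<exists>\<sigma>\<in>perms n. edge_act \<sigma> ` E = E')"

definition edge_sign :: "(nat \<Rightarrow> nat) \<Rightarrow> grph \<Rightarrow> int" where
  "edge_sign \<sigma> E = sign (\<lambda>e. if e \<in> E then edge_act \<sigma> e else e)"

definition invariant :: "nat \<Rightarrow> grph \<Rightarrow> bool" where
  "invariant n E = (\<forall>\<sigma>\<in>stab n E. edge_sign \<sigma> E = 1)"

definition skew_invariant :: "nat \<Rightarrow> grph \<Rightarrow> bool" where
  "skew_invariant n E = (\<forall>\<sigma>\<in>stab n E. sign \<sigma> * edge_sign \<sigma> E = 1)"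

definition lin_on :: "ext set \<Rightarrow> (ext \<Rightarrow> ext) \<Rightarrow> bool" where
  "lin_on A f = (\<forall>u\<in>A. \<forall>v\<in>A. \<forall>c::rat.
      f (\<lambda>S. u S + v S) = (\<lambda>S. f u S + f v S) \<and> f (\<lambda>S. c * u S) = (\<lambda>S. c * f u S))"

definition rep_choice :: "nat \<Rightarrow> (grph \<Rightarrow> grph) \<Rightarrow> bool" where
  "rep_choice n rep = ((\<forall>E. E \<subseteq> edges n \<longrightarrow> rep E \<subseteq> edges n \<and> graph_iso n E (rep E)) \<and>
     (\<forall>E E'. E \<subseteq> edges n \<longrightarrow> E' \<subseteq> edges n \<longrightarrow> graph_iso n E E' \<longrightarrow> rep E = rep E'))"

end

theory Submission
  imports Defs "HOL-Library.Product_Lexorder"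
begin

text \<open>
  A transposition of two vertices induces \<open>n - 2\<close> transpositions of the \<open>N\<close> edges of \<open>K\<^sub>n\<close>,
  so \<open>\<sigma>\<close> multiplies the top class \<open>\<mu>\<^sub>T\<close> of the complete graph by \<open>sign \<sigma> ^ n\<close>.
  Since \<open>\<mu>\<^sub>S \<mu>\<^bsub>T - S\<^esub> = \<plusminus>\<mu>\<^sub>T\<close>, the Hodge star \<open>\<mu>\<^bsub>T - S\<^esub> \<mapsto> \<plusminus>\<mu>\<^sub>S\<close> is a linear
  isomorphism from degree \<open>r\<close> to degree \<open>N - r\<close> carrying vectors that transform by a character
  \<open>\<chi>\<close> to vectors that transform by \<open>\<chi>' = sign ^ n \<cdot> \<chi>\<close>: for even \<open>n\<close> this is \<open>\<chi>\<close> itself,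
  for odd \<open>n\<close> it turns \<open>sign\<close> into the trivial character. The star sends \<open>\<alpha>\<^sub>D\<close> to
  \<open>\<plusminus>\<alpha>\<^bsub>D\<^sup>c\<^esub>\<close>; multiplying it by a sign that is constant on isomorphism classes
  removes the ambiguity.
\<close>

section \<open>Inversions\<close>

definition inversions :: "('a::linorder \<Rightarrow> 'b::linorder) \<Rightarrow> 'a set \<Rightarrow> nat" where
  "inversions g X = card {(x, y). x \<in> X \<and> y \<in> X \<and> x < y \<and> g y < g x}"

definition crossings :: "'a::linorder set \<Rightarrow> 'a set \<Rightarrow> nat" where
  "crossings T S = card {(x, y). x \<in> S \<and> y \<in> T - S \<and> x < y}"

lemma card_filter_xor:
  assumes "finite P"
  shows "card {p\<in>P. A p \<noteq> C p} + 2 * card {p\<in>P. A p \<and> C p} = card {p\<in>P. A p} + card {p\<in>P. C p}"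
proof -
  have union: "{p\<in>P. A p} \<union> {p\<in>P. C p} = {p\<in>P. A p \<noteq> C p} \<union> {p\<in>P. A p \<and> C p}"
    and inter: "{p\<in>P. A p} \<inter> {p\<in>P. C p} = {p\<in>P. A p \<and> C p}" by auto
  have "card {p\<in>P. A p} + card {p\<in>P. C p} =
      card ({p\<in>P. A p} \<union> {p\<in>P. C p}) + card ({p\<in>P. A p} \<inter> {p\<in>P. C p})"
    by (rule card_Un_Int) (use assms in auto)
  also have "card ({p\<in>P. A p} \<union> {p\<in>P. C p}) = card {p\<in>P. A p \<noteq> C p} + card {p\<in>P. A p \<and> C p}"
    unfolding union by (rule card_Un_disjoint) (use assms in auto)
  finally show ?thesis unfolding inter by simp
qed

lemma min_max_doubleton: "{min a b, max a b} = {a, b}"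
  by (auto simp: min_def max_def)

lemma inversions_image:
  fixes g :: "'a::linorder \<Rightarrow> 'b::linorder" and h :: "'b \<Rightarrow> 'c::linorder"
  assumes inj: "inj_on g X"
  shows "inversions h (g ` X) = card {(x, y). x \<in> X \<and> y \<in> X \<and> x < y \<and>
           (g x < g y \<and> h (g y) < h (g x) \<or> g y < g x \<and> h (g x) < h (g y))}"
    (is "_ = card ?P")
proof -
  define \<phi> where "\<phi> p = (min (g (fst p)) (g (snd p)), max (g (fst p)) (g (snd p)))" for p
  have inj_\<phi>: "inj_on \<phi> ?P"
  proof (rule inj_onI, clarify)
    fix x y x' y'
    assume xy: "x \<in> X" "y \<in> X" "x < y" and xy': "x' \<in> X" "y' \<in> X" "x' < y'"
      and "\<phi> (x, y) = \<phi> (x', y')"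
    then have "{g x, g y} = {g x', g y'}"
      unfolding \<phi>_def by (metis fst_conv snd_conv prod.inject min_max_doubleton)
    then have "g ` {x, y} = g ` {x', y'}" by simp
    then have "{x, y} = {x', y'}"
      by (subst (asm) inj_on_image_eq_iff[OF inj]) (use xy xy' in auto)
    with xy xy' show "x = x' \<and> y = y'"
      by (auto simp: doubleton_eq_iff)
  qed
  have img_\<phi>: "\<phi> ` ?P = {(u, v). u \<in> g ` X \<and> v \<in> g ` X \<and> u < v \<and> h v < h u}"
  proof (intro set_eqI iffI)
    fix q assume "q \<in> \<phi> ` ?P"
    then show "q \<in> {(u, v). u \<in> g ` X \<and> v \<in> g ` X \<and> u < v \<and> h v < h u}"
      unfolding \<phi>_def by (auto simp: min_def max_def)
  next
    fix q assume "q \<in> {(u, v). u \<in> g ` X \<and> v \<in> g ` X \<and> u < v \<and> h v < h u}"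
    then obtain a b where ab: "a \<in> X" "b \<in> X" "g a < g b" "h (g b) < h (g a)" "q = (g a, g b)"
      by auto
    moreover have "a \<noteq> b" using ab by auto
    ultimately have "(min a b, max a b) \<in> ?P" "q = \<phi> (min a b, max a b)"
      by (auto simp: \<phi>_def min_def max_def neq_iff)
    then show "q \<in> \<phi> ` ?P" by blast
  qed
  show ?thesis
    unfolding inversions_def img_\<phi>[symmetric] card_image[OF inj_\<phi>] ..
qed

text \<open>A pair is reversed by \<open>h \<circ> g\<close> iff it is reversed by exactly one of \<open>g\<close> and \<open>h\<close>.\<close>

lemma even_inversions_comp:
  fixes g :: "'a::linorder \<Rightarrow> 'b::linorder" and h :: "'b \<Rightarrow> 'c::linorder"
  assumes fin: "finite X" and inj_g: "inj_on g X" and inj_h: "inj_on h (g ` X)"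
  shows "even (inversions (h \<circ> g) X + inversions g X + inversions h (g ` X))"
proof -
  define P where "P = {(x, y). x \<in> X \<and> y \<in> X \<and> x < y}"
  define A where "A p = (g (snd p) < g (fst p))" for p
  define C where "C p = (g (fst p) < g (snd p) \<and> h (g (snd p)) < h (g (fst p)) \<or>
                         g (snd p) < g (fst p) \<and> h (g (fst p)) < h (g (snd p)))" for p
  have "finite P"
    unfolding P_def by (rule finite_subset[of _ "X \<times> X"]) (use fin in auto)
  have "(h (g y) < h (g x)) = (A (x, y) \<noteq> C (x, y))" if "x \<in> X" "y \<in> X" "x < y" for x y
  proof -
    have "g x \<noteq> g y" "h (g x) \<noteq> h (g y)"
      using that inj_g inj_h by (metis image_eqI inj_onD less_irrefl)+
    then show ?thesis by (auto simp: A_def C_def neq_iff)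
  qed
  then have "inversions (h \<circ> g) X = card {p\<in>P. A p \<noteq> C p}"
    unfolding inversions_def P_def by (intro arg_cong[where f = card]) auto
  moreover have "inversions g X = card {p\<in>P. A p}"
    unfolding inversions_def P_def A_def by (rule arg_cong[where f = card]) auto
  moreover have "inversions h (g ` X) = card {p\<in>P. C p}"
    unfolding inversions_image[OF inj_g] P_def C_def by (rule arg_cong[where f = card]) auto
  ultimately have "inversions (h \<circ> g) X + inversions g X + inversions h (g ` X) =
      2 * (card {p\<in>P. A p \<noteq> C p} + card {p\<in>P. A p \<and> C p})"
    using card_filter_xor[OF \<open>finite P\<close>, of A C] by simp
  then show ?thesis by simp
qed

lemma inversions_Diff_decomp:
  fixes g :: "'a::linorder \<Rightarrow> 'b::linorder"
  assumes fin: "finite T" and sub: "S \<subseteq> T"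
  shows "inversions g T = inversions g S + inversions g (T - S) +
           card {(x, y). x \<in> S \<and> y \<in> T - S \<and> (x < y \<and> g y < g x \<or> y < x \<and> g x < g y)}"
    (is "_ = _ + _ + card ?mixed")
proof -
  define inv where "inv X = {(x, y). x \<in> X \<and> y \<in> X \<and> x < y \<and> g y < g x}" for X
  define M where "M = {(x, y). x \<in> T \<and> y \<in> T \<and> x < y \<and> g y < g x \<and> (x \<in> S) \<noteq> (y \<in> S)}"
  have fin_inv: "finite (inv X)" if "X \<subseteq> T" for X
    by (rule finite_subset[of _ "T \<times> T"]) (use that fin in \<open>auto simp: inv_def\<close>)
  have "finite M"
    by (rule finite_subset[of _ "T \<times> T"]) (use fin in \<open>auto simp: M_def\<close>)
  have "inv T = (inv S \<union> inv (T - S)) \<union> M"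
    using sub unfolding inv_def M_def by auto
  moreover have "inv S \<inter> inv (T - S) = {}" "(inv S \<union> inv (T - S)) \<inter> M = {}"
    unfolding inv_def M_def by auto
  ultimately have "card (inv T) = card (inv S) + card (inv (T - S)) + card M"
    using fin_inv[of S] fin_inv[of "T - S"] \<open>finite M\<close> sub by (simp add: card_Un_disjoint)
  moreover have "bij_betw (\<lambda>(x, y). if x \<in> S then (x, y) else (y, x)) M ?mixed"
  proof (rule bij_betw_byWitness[where f' = "\<lambda>(x, y). (min x y, max x y)"])
    show "\<forall>p\<in>M. (\<lambda>(x, y). (min x y, max x y)) ((\<lambda>(x, y). if x \<in> S then (x, y) else (y, x)) p) = p"
      unfolding M_def by auto
    show "\<forall>p\<in>?mixed. (\<lambda>(x, y). if x \<in> S then (x, y) else (y, x)) ((\<lambda>(x, y). (min x y, max x y)) p) = p"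
      by (auto simp: min_def max_def)
    show "(\<lambda>(x, y). if x \<in> S then (x, y) else (y, x)) ` M \<subseteq> ?mixed"
      unfolding M_def by auto
    show "(\<lambda>(x, y). (min x y, max x y)) ` ?mixed \<subseteq> M"
      using sub unfolding M_def by (auto simp: min_def max_def split: if_splits)
  qed
  ultimately show ?thesis
    unfolding inversions_def inv_def[symmetric] by (simp add: bij_betw_same_card)
qed

lemma crossings_image:
  fixes g :: "'a::linorder \<Rightarrow> 'b::linorder"
  assumes sub: "S \<subseteq> T" and inj: "inj_on g T"
  shows "crossings (g ` T) (g ` S) = card {(x, y). x \<in> S \<and> y \<in> T - S \<and> g x < g y}"
    (is "_ = card ?P")
proof -
  have "inj_on (map_prod g g) (S \<times> (T - S))"
    by (rule map_prod_inj_on; rule inj_on_subset[OF inj]) (use sub in auto)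
  then have inj_P: "inj_on (map_prod g g) ?P"
    by (rule inj_on_subset) auto
  have diff: "g ` T - g ` S = g ` (T - S)"
    using inj_on_image_set_diff[OF inj _ sub] by simp
  have "map_prod g g ` ?P = {(u, v). u \<in> g ` S \<and> v \<in> g ` T - g ` S \<and> u < v}"
  proof (intro set_eqI iffI)
    fix q assume "q \<in> map_prod g g ` ?P"
    then show "q \<in> {(u, v). u \<in> g ` S \<and> v \<in> g ` T - g ` S \<and> u < v}"
      unfolding diff by auto
  next
    fix q assume "q \<in> {(u, v). u \<in> g ` S \<and> v \<in> g ` T - g ` S \<and> u < v}"
    then obtain x y where "x \<in> S" "y \<in> T - S" "g x < g y" "q = (g x, g y)"
      unfolding diff by auto
    then show "q \<in> map_prod g g ` ?P" by force
  qed
  then show ?thesis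
    unfolding crossings_def using card_image[OF inj_P] by simp
qed

lemma even_inversions_Diff:
  fixes g :: "'a::linorder \<Rightarrow> 'b::linorder"
  assumes fin: "finite T" and sub: "S \<subseteq> T" and inj: "inj_on g T"
  shows "even (inversions g T + inversions g S + inversions g (T - S) +
               crossings T S + crossings (g ` T) (g ` S))"
proof -
  define Q where "Q = S \<times> (T - S)"
  define A where "A p = (fst p < snd p)" for p :: "'a \<times> 'a"
  define C where "C p = (g (fst p) < g (snd p))" for p
  have "finite Q" unfolding Q_def using fin sub by (simp add: finite_subset)
  have "{(x, y). x \<in> S \<and> y \<in> T - S \<and> (x < y \<and> g y < g x \<or> y < x \<and> g x < g y)} =
      {p\<in>Q. A p \<noteq> C p}"
  proof (intro set_eqI, clarify)
    fix x y
    show "((x, y) \<in> {(x, y). x \<in> S \<and> y \<in> T - S \<and> (x < y \<and> g y < g x \<or> y < x \<and> g x < g y)}) =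
        ((x, y) \<in> {p\<in>Q. A p \<noteq> C p})"
    proof (cases "x \<in> S \<and> y \<in> T - S")
      case True
      then have "x \<noteq> y" "g x \<noteq> g y"
        using inj sub by (auto dest: inj_onD)
      then show ?thesis
        using True unfolding Q_def A_def C_def by (auto simp: neq_iff)
    qed (auto simp: Q_def)
  qed
  then have "inversions g T = inversions g S + inversions g (T - S) + card {p\<in>Q. A p \<noteq> C p}"
    using inversions_Diff_decomp[OF fin sub, where g = g] by simp
  moreover have "crossings T S = card {p\<in>Q. A p}"
    unfolding crossings_def Q_def A_def by (rule arg_cong[where f = card]) auto
  moreover have "crossings (g ` T) (g ` S) = card {p\<in>Q. C p}"
    unfolding crossings_image[OF sub inj] Q_def C_def by (rule arg_cong[where f = card]) auto
  ultimately have sum_eq: "inversions g T + inversions g S + inversions g (T - S) +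
        crossings T S + crossings (g ` T) (g ` S) =
      2 * (inversions g S + inversions g (T - S) + card {p\<in>Q. A p \<noteq> C p} + card {p\<in>Q. A p \<and> C p})"
    using card_filter_xor[OF \<open>finite Q\<close>, of A C] by simp
  show ?thesis unfolding sum_eq by simp
qed

section \<open>The action on edges\<close>

lemma edge_act_pair: "edge_act \<sigma> (a, b) = (min (\<sigma> a) (\<sigma> b), max (\<sigma> a) (\<sigma> b))"
  unfolding edge_act_def by (auto simp: min_def max_def)

lemma lex_less_eq_less: "lex_less = (<)"
  unfolding lex_less_def by (auto simp: fun_eq_iff less_prod_def)

lemma inv_count_eq_inversions: "inv_count \<sigma> E = inversions (edge_act \<sigma>) E"
  unfolding inv_count_def inversions_def lex_less_eq_less ..

lemma finite_edges: "finite (edges n)"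
  by (rule finite_subset[of _ "{1..n} \<times> {1..n}"]) (auto simp: edges_def)

lemma card_edges: "card (edges n) = n * (n - 1) div 2"
proof (induction n)
  case 0
  have "edges 0 = {}" by (auto simp: edges_def)
  then show ?case by simp
next
  case (Suc n)
  have "edges (Suc n) = edges n \<union> (\<lambda>i. (i, Suc n)) ` {1..n}"
    by (auto simp: edges_def)
  moreover have "card (edges n \<union> (\<lambda>i. (i, Suc n)) ` {1..n}) = card (edges n) + n"
    by (subst card_Un_disjoint) (use finite_edges in \<open>auto simp: edges_def card_image inj_on_def\<close>)
  ultimately have "card (edges (Suc n)) = n * (n - 1) div 2 + n"
    using Suc by simp
  also have "\<dots> = Suc n * (Suc n - 1) div 2"
    by (cases n) simp_all
  finally show ?case .
qed

lemma perms_compose: "\<sigma> \<in> perms n \<Longrightarrow> \<tau> \<in> perms n \<Longrightarrow> \<sigma> \<circ> \<tau> \<in> perms n"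
  by (simp add: perms_def permutes_compose)

lemma perms_inv: "\<sigma> \<in> perms n \<Longrightarrow> inv \<sigma> \<in> perms n"
  by (simp add: perms_def permutes_inv)

lemma perms_inv_o: "\<sigma> \<in> perms n \<Longrightarrow> inv \<sigma> \<circ> \<sigma> = id" "\<sigma> \<in> perms n \<Longrightarrow> \<sigma> \<circ> inv \<sigma> = id"
  by (auto simp: perms_def permutes_inv_o)

lemma edge_act_in_edges:
  assumes "\<sigma> \<in> perms n" and "e \<in> edges n"
  shows "edge_act \<sigma> e \<in> edges n"
proof -
  obtain a b where ab: "e = (a, b)" "1 \<le> a" "a < b" "b \<le> n"
    using assms(2) by (auto simp: edges_def)
  have perm: "\<sigma> permutes {1..n}" using assms(1) by (simp add: perms_def)
  then have "\<sigma> a \<in> {1..n}" "\<sigma> b \<in> {1..n}"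
    using permutes_in_image[OF perm, of a] permutes_in_image[OF perm, of b] ab by simp_all
  moreover have "\<sigma> a \<noteq> \<sigma> b"
    using ab permutes_inj[OF perm] by (metis injD less_irrefl)
  ultimately show ?thesis
    using ab by (auto simp: edge_act_pair edges_def min_def max_def)
qed

lemma edge_act_subset: "\<sigma> \<in> perms n \<Longrightarrow> X \<subseteq> edges n \<Longrightarrow> edge_act \<sigma> ` X \<subseteq> edges n"
  using edge_act_in_edges by blast

lemma edge_act_comp: "edge_act (\<sigma> \<circ> \<tau>) = edge_act \<sigma> \<circ> edge_act \<tau>"
proof
  fix e :: edge
  obtain a b where "e = (a, b)" by fastforce
  then show "edge_act (\<sigma> \<circ> \<tau>) e = (edge_act \<sigma> \<circ> edge_act \<tau>) e"
    by (cases "\<tau> a \<le> \<tau> b") (simp_all add: edge_act_pair min_def max_def)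
qed

lemma edge_act_id_image: "X \<subseteq> edges n \<Longrightarrow> edge_act id ` X = X"
  by (force simp: edge_act_def edges_def)

lemma edge_act_inv_image:
  assumes "\<sigma> \<in> perms n" and "X \<subseteq> edges n"
  shows "edge_act (inv \<sigma>) ` edge_act \<sigma> ` X = X" and "edge_act \<sigma> ` edge_act (inv \<sigma>) ` X = X"
  using edge_act_id_image[OF assms(2)] perms_inv_o[OF assms(1)]
  by (simp_all add: image_comp flip: edge_act_comp)

lemma inj_on_edge_act:
  assumes "\<sigma> \<in> perms n"
  shows "inj_on (edge_act \<sigma>) (edges n)"
proof (rule inj_onI)
  fix e e' assume e: "e \<in> edges n" "e' \<in> edges n" and "edge_act \<sigma> e = edge_act \<sigma> e'"
  then have "edge_act (inv \<sigma>) ` edge_act \<sigma> ` {e} = edge_act (inv \<sigma>) ` edge_act \<sigma> ` {e'}"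
    by simp
  then show "e = e'"
    using edge_act_inv_image(1)[OF assms, of "{e}"] edge_act_inv_image(1)[OF assms, of "{e'}"] e
    by simp
qed

lemma edge_act_image_edges: "\<sigma> \<in> perms n \<Longrightarrow> edge_act \<sigma> ` edges n = edges n"
  by (rule endo_inj_surj[OF finite_edges]) (simp_all add: edge_act_subset inj_on_edge_act)

lemma edge_act_image_Diff:
  "\<sigma> \<in> perms n \<Longrightarrow> X \<subseteq> edges n \<Longrightarrow> edge_act \<sigma> ` (edges n - X) = edges n - edge_act \<sigma> ` X"
  using inj_on_image_set_diff[OF inj_on_edge_act Diff_subset, of \<sigma> n X] edge_act_image_edges
  by simp

lemma edge_act_image_eq_iff:
  "\<sigma> \<in> perms n \<Longrightarrow> X \<subseteq> edges n \<Longrightarrow> Y \<subseteq> edges n \<Longrightarrow> edge_act \<sigma> ` X = edge_act \<sigma> ` Y \<longleftrightarrow> X = Y"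
  using inj_on_image_eq_iff[OF inj_on_edge_act] by blast

lemma graph_iso_sym: "X \<subseteq> edges n \<Longrightarrow> graph_iso n X Y \<Longrightarrow> graph_iso n Y X"
  unfolding graph_iso_def using perms_inv edge_act_inv_image(1) by blast

lemma graph_iso_trans: "graph_iso n X Y \<Longrightarrow> graph_iso n Y Z \<Longrightarrow> graph_iso n X Z"
  unfolding graph_iso_def by (metis edge_act_comp image_comp perms_compose)

lemma graph_iso_subset: "X \<subseteq> edges n \<Longrightarrow> graph_iso n X Y \<Longrightarrow> Y \<subseteq> edges n"
  unfolding graph_iso_def using edge_act_subset by blast

lemma graph_iso_Diff:
  "X \<subseteq> edges n \<Longrightarrow> graph_iso n X Y \<Longrightarrow> graph_iso n (edges n - X) (edges n - Y)"
  unfolding graph_iso_def using edge_act_image_Diff by blast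

lemma graph_iso_image: "\<sigma> \<in> perms n \<Longrightarrow> graph_iso n X (edge_act \<sigma> ` X)"
  unfolding graph_iso_def by blast

lemma rep_choice_subset: "rep_choice n rep \<Longrightarrow> X \<subseteq> edges n \<Longrightarrow> rep X \<subseteq> edges n"
  unfolding rep_choice_def by blast

lemma rep_choice_iso: "rep_choice n rep \<Longrightarrow> X \<subseteq> edges n \<Longrightarrow> graph_iso n X (rep X)"
  unfolding rep_choice_def by blast

lemma rep_choice_eq:
  "rep_choice n rep \<Longrightarrow> X \<subseteq> edges n \<Longrightarrow> graph_iso n X Y \<Longrightarrow> rep Y = rep X"
  using graph_iso_subset unfolding rep_choice_def by metis

lemma rep_choice_complement:
  assumes rep: "rep_choice n rep" and E: "E \<subseteq> edges n" and iso: "graph_iso n (edges n - rep E) S"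
  shows "rep S = rep (edges n - E)" and "rep (edges n - S) = rep E"
proof -
  have ER: "graph_iso n E (rep E)"
    by (rule rep_choice_iso[OF rep E])
  have "graph_iso n (edges n - E) S"
    using graph_iso_trans[OF graph_iso_Diff[OF E ER] iso] .
  then show "rep S = rep (edges n - E)"
    by (rule rep_choice_eq[OF rep Diff_subset])
  have "graph_iso n (rep E) (edges n - S)"
    using graph_iso_Diff[OF Diff_subset iso] rep_choice_subset[OF rep E] by (simp add: double_diff)
  then show "rep (edges n - S) = rep E"
    by (rule rep_choice_eq[OF rep E graph_iso_trans[OF ER]])
qed

section \<open>The sign of the top class\<close>

lemma minus_one_power_eq_if_even_add: "even (a + b) \<Longrightarrow> (- 1 :: 'a::ring_1) ^ a = (- 1) ^ b"
  by (auto simp: minus_one_power_iff)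

definition act_sign :: "(nat \<Rightarrow> nat) \<Rightarrow> grph \<Rightarrow> rat" where
  "act_sign \<sigma> X = (- 1) ^ inv_count \<sigma> X"

text \<open>\<open>\<mu>\<^sub>S \<mu>\<^bsub>T - S\<^esub> = crossing_sign n S \<mu>\<^sub>T\<close> for the top class \<open>\<mu>\<^sub>T\<close>, \<open>T = edges n\<close>.\<close>

definition crossing_sign :: "nat \<Rightarrow> grph \<Rightarrow> rat" where
  "crossing_sign n S = (- 1) ^ crossings (edges n) S"

lemma act_sign_comp:
  assumes \<sigma>: "\<sigma> \<in> perms n" and \<tau>: "\<tau> \<in> perms n" and X: "X \<subseteq> edges n"
  shows "act_sign (\<sigma> \<circ> \<tau>) X = act_sign \<sigma> (edge_act \<tau> ` X) * act_sign \<tau> X"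
proof -
  have "even (inversions (edge_act \<sigma> \<circ> edge_act \<tau>) X +
              (inversions (edge_act \<tau>) X + inversions (edge_act \<sigma>) (edge_act \<tau> ` X)))"
    using even_inversions_comp[of X "edge_act \<tau>" "edge_act \<sigma>"]
      finite_subset[OF X finite_edges] inj_on_subset[OF inj_on_edge_act[OF \<tau>] X]
      inj_on_subset[OF inj_on_edge_act[OF \<sigma>] edge_act_subset[OF \<tau> X]]
    by (simp add: add.assoc)
  then have "(- 1 :: rat) ^ inversions (edge_act \<sigma> \<circ> edge_act \<tau>) X =
      (- 1) ^ (inversions (edge_act \<tau>) X + inversions (edge_act \<sigma>) (edge_act \<tau> ` X))"
    by (rule minus_one_power_eq_if_even_add)
  then show ?thesis
    unfolding act_sign_def inv_count_eq_inversions edge_act_comp by (simp add: power_add mult.commute)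
qed

lemma act_sign_Diff:
  assumes \<sigma>: "\<sigma> \<in> perms n" and S: "S \<subseteq> edges n"
  shows "act_sign \<sigma> (edges n) =
    act_sign \<sigma> S * act_sign \<sigma> (edges n - S) * crossing_sign n S * crossing_sign n (edge_act \<sigma> ` S)"
proof -
  have "even (inversions (edge_act \<sigma>) (edges n) +
       (inversions (edge_act \<sigma>) S + inversions (edge_act \<sigma>) (edges n - S) +
        crossings (edges n) S + crossings (edges n) (edge_act \<sigma> ` S)))"
    using even_inversions_Diff[OF finite_edges S inj_on_edge_act[OF \<sigma>]]
    unfolding edge_act_image_edges[OF \<sigma>] by (simp add: add.assoc)
  then have "(- 1 :: rat) ^ inversions (edge_act \<sigma>) (edges n) =
      (- 1) ^ (inversions (edge_act \<sigma>) S + inversions (edge_act \<sigma>) (edges n - S) +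
        crossings (edges n) S + crossings (edges n) (edge_act \<sigma> ` S))"
    by (rule minus_one_power_eq_if_even_add)
  then show ?thesis
    unfolding act_sign_def crossing_sign_def inv_count_eq_inversions by (simp add: power_add)
qed

lemma act_sign_id: "act_sign id (edges n) = 1"
proof -
  have id: "edge_act id e = e" if "e \<in> edges n" for e
    using edge_act_id_image[of "{e}" n] that by simp
  have no_inversions:
    "{(x, y). x \<in> edges n \<and> y \<in> edges n \<and> x < y \<and> edge_act id y < edge_act id x} = {}"
  proof (rule equals0I)
    fix p assume "p \<in> {(x, y). x \<in> edges n \<and> y \<in> edges n \<and> x < y \<and> edge_act id y < edge_act id x}"
    then obtain x y where "x \<in> edges n" "y \<in> edges n" "x < y" "edge_act id y < edge_act id x"
      by blast
    then show False using id[of x] id[of y] by simp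
  qed
  then show ?thesis
    unfolding act_sign_def inv_count_eq_inversions inversions_def no_inversions by simp
qed

lemma transpose_Suc_reverses_pair:
  fixes a b c d i :: nat
  assumes "a < b" "c < d" "(a, b) < (c, d)"
    and "edge_act (Transposition.transpose i (Suc i)) (c, d) < edge_act (Transposition.transpose i (Suc i)) (a, b)"
  shows "c = a \<and> b = i \<and> d = Suc i \<or> a = i \<and> c = Suc i \<and> Suc i < b \<and> Suc i < d"
proof -
  let ?s = "Transposition.transpose i (Suc i)"
  have s: "?s x = (if x = i then Suc i else if x = Suc i then i else x)" for x
    by (simp add: Transposition.transpose_def)
  show ?thesis
    using assms unfolding less_prod_def edge_act_pair fst_conv snd_conv
      s[of a] s[of b] s[of c] s[of d] min_def max_def
    by (simp split: if_splits; linarith)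
qed

lemma edge_inversions_transpose_Suc:
  assumes "1 \<le> i" "Suc i \<le> n"
  shows "{(x, y). x \<in> edges n \<and> y \<in> edges n \<and> x < y \<and>
            edge_act (Transposition.transpose i (Suc i)) y < edge_act (Transposition.transpose i (Suc i)) x} =
    (\<lambda>a. ((a, i), (a, Suc i))) ` {1..<i} \<union>
    (\<lambda>(b, d). ((i, b), (Suc i, d))) ` ({Suc (Suc i)..n} \<times> {Suc (Suc i)..n})"
    (is "?L = ?R")
proof (intro set_eqI iffI)
  let ?s = "Transposition.transpose i (Suc i)"
  fix p assume "p \<in> ?L"
  then obtain a b c d where p: "p = ((a, b), (c, d))" "1 \<le> a" "a < b" "b \<le> n" "1 \<le> c" "c < d"
    "d \<le> n" "(a, b) < (c, d)" "edge_act ?s (c, d) < edge_act ?s (a, b)"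
    unfolding edges_def by auto
  then have "c = a \<and> b = i \<and> d = Suc i \<or> a = i \<and> c = Suc i \<and> Suc i < b \<and> Suc i < d"
    using transpose_Suc_reverses_pair by blast
  then show "p \<in> ?R" using p by auto
next
  fix p assume "p \<in> ?R"
  then show "p \<in> ?L"
    using assms by (auto simp: edge_act_pair Transposition.transpose_def edges_def)
qed

lemma act_sign_transpose_Suc:
  assumes "1 \<le> i" "Suc i \<le> n"
  shows "act_sign (Transposition.transpose i (Suc i)) (edges n) = (- 1) ^ n"
proof -
  let ?A = "(\<lambda>a. ((a, i), (a, Suc i))) ` {1..<i}"
  let ?B = "(\<lambda>(b, d). ((i, b), (Suc i, d))) ` ({Suc (Suc i)..n} \<times> {Suc (Suc i)..n})"
  have "card ?A = i - 1"
    by (simp add: card_image inj_on_def)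
  moreover have "card ?B = (n - Suc i) * (n - Suc i)"
    by (subst card_image) (auto simp: inj_on_def)
  moreover have "card (?A \<union> ?B) = card ?A + card ?B"
    by (rule card_Un_disjoint) auto
  ultimately have "inv_count (Transposition.transpose i (Suc i)) (edges n) =
      (i - 1) + (n - Suc i) * (n - Suc i)"
    unfolding inv_count_eq_inversions inversions_def edge_inversions_transpose_Suc[OF assms]
    by simp
  moreover have "even ((i - 1) + (n - Suc i) * (n - Suc i) + n)"
  proof -
    obtain m where n: "n = Suc i + m"
      using assms(2) by (metis le_Suc_ex)
    have "(i - 1) + m * m + (Suc i + m) = m * (m + 1) + 2 * i"
      using assms(1) by (simp add: algebra_simps)
    then show ?thesis unfolding n by simp
  qed
  ultimately have "even (inv_count (Transposition.transpose i (Suc i)) (edges n) + n)"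
    by simp
  then show ?thesis
    unfolding act_sign_def by (rule minus_one_power_eq_if_even_add)
qed

lemma transpose_in_perms: "a \<in> {1..n} \<Longrightarrow> b \<in> {1..n} \<Longrightarrow> Transposition.transpose a b \<in> perms n"
  by (simp add: perms_def permutes_swap_id)

lemma act_sign_edges_mult:
  "\<sigma> \<in> perms n \<Longrightarrow> \<tau> \<in> perms n \<Longrightarrow> act_sign (\<sigma> \<circ> \<tau>) (edges n) = act_sign \<sigma> (edges n) * act_sign \<tau> (edges n)"
  using act_sign_comp[of \<sigma> n \<tau> "edges n"] edge_act_image_edges[of \<tau> n] by simp

lemma act_sign_transpose:
  assumes "a \<in> {1..n}" "b \<in> {1..n}" "a \<noteq> b"
  shows "act_sign (Transposition.transpose a b) (edges n) = (- 1) ^ n"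
proof -
  have *: "act_sign (Transposition.transpose a b) (edges n) = (- 1) ^ n"
    if ab: "a \<in> {1..n}" "b \<in> {1..n}" "a < b" for a b
  proof -
    let ?c = "Transposition.transpose (Suc a) b" and ?s = "Transposition.transpose a (Suc a)"
    have "Transposition.transpose a b = ?c \<circ> ?s \<circ> ?c"
      using ab by (simp add: Transposition.transpose_def fun_eq_iff)
    moreover have "?c \<in> perms n" "?s \<in> perms n"
      using ab by (auto intro: transpose_in_perms)
    ultimately have "act_sign (Transposition.transpose a b) (edges n) =
        act_sign ?c (edges n) * act_sign ?c (edges n) * act_sign ?s (edges n)"
      by (simp add: act_sign_edges_mult perms_compose)
    also have "\<dots> = (- 1) ^ n"
      using ab by (simp add: act_sign_def act_sign_transpose_Suc[unfolded act_sign_def])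
    finally show ?thesis .
  qed
  from assms consider "a < b" | "b < a" by linarith
  then show ?thesis
  proof cases
    case 1
    then show ?thesis using *[of a b] assms by blast
  next
    case 2
    then show ?thesis using *[of b a] assms by (simp add: transpose_commute)
  qed
qed

lemma act_sign_edges:
  assumes "\<sigma> \<in> perms n"
  shows "act_sign \<sigma> (edges n) = of_int (sign \<sigma>) ^ n"
proof -
  have "\<sigma> permutes {1..n}" using assms by (simp add: perms_def)
  then show ?thesis using finite_atLeastAtMost
  proof (induction rule: permutes_induct)
    case id
    then show ?case using act_sign_id by (simp add: id_def)
  next
    case (swap a b p)
    have "p \<in> perms n" "Transposition.transpose a b \<in> perms n"
      using swap by (simp_all add: perms_def permutes_swap_id)
    moreover have "sign (Transposition.transpose a b \<circ> p) = - sign p"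
      using swap permutes_imp_permutation[OF finite_atLeastAtMost swap(4)]
      by (simp add: sign_compose permutation_swap_id sign_swap_id)
    ultimately have "act_sign (Transposition.transpose a b \<circ> p) (edges n) =
        of_int (sign (Transposition.transpose a b \<circ> p)) ^ n"
      using swap act_sign_transpose[of a n b]
      by (simp add: act_sign_edges_mult power_mult_distrib[symmetric])
    then show ?case by (simp add: comp_def)
  qed
qed

section \<open>Semi-invariants and the classes \<open>\<alpha>\<close>\<close>

lemma act_image:
  assumes \<sigma>: "\<sigma> \<in> perms n" and Y: "Y \<subseteq> edges n"
  shows "act n \<sigma> v (edge_act \<sigma> ` Y) = act_sign \<sigma> Y * v Y"
proof -
  have "act n \<sigma> v (edge_act \<sigma> ` Y) = (\<Sum>E\<in>Pow (edges n). if E = Y then act_sign \<sigma> E * v E else 0)"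
    unfolding act_def act_sign_def
  proof (rule sum.cong[OF refl])
    fix E assume "E \<in> Pow (edges n)"
    then have "edge_act \<sigma> ` E = edge_act \<sigma> ` Y \<longleftrightarrow> E = Y"
      using edge_act_image_eq_iff[OF \<sigma> _ Y] by blast
    then show "(if edge_act \<sigma> ` E = edge_act \<sigma> ` Y then (- 1) ^ inv_count \<sigma> E * v E else 0) =
        (if E = Y then (- 1) ^ inv_count \<sigma> E * v E else 0)"
      by simp
  qed
  also have "\<dots> = act_sign \<sigma> Y * v Y"
    using Y finite_edges[of n] by (simp add: sum.delta)
  finally show ?thesis .
qed

lemma act_outside:
  assumes \<sigma>: "\<sigma> \<in> perms n" and S: "\<not> S \<subseteq> edges n"
  shows "act n \<sigma> v S = 0"
  unfolding act_def
proof (rule sum.neutral, rule ballI)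
  fix E assume "E \<in> Pow (edges n)"
  then have "edge_act \<sigma> ` E \<noteq> S"
    using edge_act_subset[OF \<sigma>] S by blast
  then show "(if edge_act \<sigma> ` E = S then (- 1) ^ inv_count \<sigma> E * v E else 0) = 0"
    by simp
qed

lemma act_mu:
  assumes "R \<subseteq> edges n"
  shows "act n \<sigma> (mu R) S = (if edge_act \<sigma> ` R = S then act_sign \<sigma> R else 0)"
proof -
  have "act n \<sigma> (mu R) S =
      (\<Sum>E\<in>Pow (edges n). if E = R then (if edge_act \<sigma> ` R = S then act_sign \<sigma> R else 0) else 0)"
    unfolding act_def by (rule sum.cong[OF refl]) (auto simp: mu_def act_sign_def)
  also have "\<dots> = (if edge_act \<sigma> ` R = S then act_sign \<sigma> R else 0)"
    using assms finite_edges[of n] by (simp add: sum.delta)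
  finally show ?thesis .
qed

definition act_twisted :: "nat \<Rightarrow> ((nat \<Rightarrow> nat) \<Rightarrow> rat) \<Rightarrow> (nat \<Rightarrow> nat) \<Rightarrow> ext \<Rightarrow> ext" where
  "act_twisted n \<chi> \<sigma> v = (\<lambda>S. \<chi> \<sigma> * act n \<sigma> v S)"

definition semi_invariant :: "nat \<Rightarrow> ((nat \<Rightarrow> nat) \<Rightarrow> rat) \<Rightarrow> ext \<Rightarrow> bool" where
  "semi_invariant n \<chi> v \<longleftrightarrow>
    (\<forall>\<sigma>\<in>perms n. \<forall>Y. Y \<subseteq> edges n \<longrightarrow> v (edge_act \<sigma> ` Y) = \<chi> \<sigma> * act_sign \<sigma> Y * v Y)"

definition semi_invariants :: "nat \<Rightarrow> ((nat \<Rightarrow> nat) \<Rightarrow> rat) \<Rightarrow> nat \<Rightarrow> ext set" where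
  "semi_invariants n \<chi> r = {v \<in> ext_deg n r. semi_invariant n \<chi> v}"

lemma act_twisted_fixed_iff:
  assumes \<sigma>: "\<sigma> \<in> perms n" and v: "\<forall>S. v S \<noteq> 0 \<longrightarrow> S \<subseteq> edges n"
  shows "act_twisted n \<chi> \<sigma> v = v \<longleftrightarrow>
    (\<forall>Y. Y \<subseteq> edges n \<longrightarrow> v (edge_act \<sigma> ` Y) = \<chi> \<sigma> * act_sign \<sigma> Y * v Y)"
proof
  assume fixed: "act_twisted n \<chi> \<sigma> v = v"
  show "\<forall>Y. Y \<subseteq> edges n \<longrightarrow> v (edge_act \<sigma> ` Y) = \<chi> \<sigma> * act_sign \<sigma> Y * v Y"
    using act_image[OF \<sigma>] fun_cong[OF fixed] by (simp add: act_twisted_def) (metis mult.assoc)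
next
  assume coeff: "\<forall>Y. Y \<subseteq> edges n \<longrightarrow> v (edge_act \<sigma> ` Y) = \<chi> \<sigma> * act_sign \<sigma> Y * v Y"
  show "act_twisted n \<chi> \<sigma> v = v"
  proof
    fix S
    show "act_twisted n \<chi> \<sigma> v S = v S"
    proof (cases "S \<subseteq> edges n")
      case True
      define Y where "Y = edge_act (inv \<sigma>) ` S"
      have Y: "Y \<subseteq> edges n" and S: "S = edge_act \<sigma> ` Y"
        unfolding Y_def using edge_act_subset[OF perms_inv[OF \<sigma>] True] edge_act_inv_image(2)[OF \<sigma> True]
        by simp_all
      show ?thesis
        unfolding act_twisted_def S act_image[OF \<sigma> Y] using coeff Y by simp
    next
      case False
      then have "v S = 0" using v by blast
      then show ?thesis
        using act_outside[OF \<sigma> False] by (simp add: act_twisted_def)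
    qed
  qed
qed

lemma fixed_iff_semi_invariant:
  "v \<in> ext_deg n r \<Longrightarrow> (\<forall>\<sigma>\<in>perms n. act_twisted n \<chi> \<sigma> v = v) \<longleftrightarrow> semi_invariant n \<chi> v"
  unfolding semi_invariant_def ext_deg_def by (simp add: act_twisted_fixed_iff)

lemma H_eq_semi_invariants: "H n r = semi_invariants n (\<lambda>_. 1) r"
proof -
  have act_eq: "act n \<sigma> v = act_twisted n (\<lambda>_. 1) \<sigma> v" for v \<sigma>
    by (simp add: act_twisted_def)
  show ?thesis
    unfolding H_def semi_invariants_def act_eq using fixed_iff_semi_invariant by blast
qed

lemma Hsgn_eq_semi_invariants: "Hsgn n r = semi_invariants n (\<lambda>\<sigma>. of_int (sign \<sigma>)) r"
proof -
  have act_sgn_eq: "act_sgn n \<sigma> v = act_twisted n (\<lambda>\<sigma>. of_int (sign \<sigma>)) \<sigma> v" for v \<sigma>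
    by (simp add: act_twisted_def act_sgn_def)
  show ?thesis
    unfolding Hsgn_def semi_invariants_def act_sgn_eq using fixed_iff_semi_invariant by blast
qed

definition alpha_twisted :: "nat \<Rightarrow> ((nat \<Rightarrow> nat) \<Rightarrow> rat) \<Rightarrow> grph \<Rightarrow> ext" where
  "alpha_twisted n \<chi> R =
    (\<lambda>S. (1 / of_nat (card (stab n R))) * (\<Sum>\<sigma>\<in>perms n. act_twisted n \<chi> \<sigma> (mu R) S))"

lemma alpha_eq_alpha_twisted: "alpha n R = alpha_twisted n (\<lambda>_. 1) R"
  unfolding alpha_def alpha_twisted_def act_twisted_def by simp

lemma alpha_sgn_eq_alpha_twisted: "alpha_sgn n R = alpha_twisted n (\<lambda>\<sigma>. of_int (sign \<sigma>)) R"
  unfolding alpha_sgn_def alpha_twisted_def act_twisted_def act_sgn_def by simp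

lemma alpha_twisted_apply:
  assumes "R \<subseteq> edges n"
  shows "alpha_twisted n \<chi> R S = (1 / of_nat (card (stab n R))) *
           (\<Sum>\<sigma>\<in>perms n. if edge_act \<sigma> ` R = S then \<chi> \<sigma> * act_sign \<sigma> R else 0)"
  unfolding alpha_twisted_def act_twisted_def act_mu[OF assms] by (simp add: if_distrib cong: if_cong)

lemma alpha_twisted_eq_0:
  "R \<subseteq> edges n \<Longrightarrow> \<not> graph_iso n R S \<Longrightarrow> alpha_twisted n \<chi> R S = 0"
  unfolding alpha_twisted_apply graph_iso_def by (auto intro!: sum.neutral)

definition sign_character :: "nat \<Rightarrow> ((nat \<Rightarrow> nat) \<Rightarrow> rat) \<Rightarrow> bool" where
  "sign_character n \<chi> \<longleftrightarrow> (\<forall>\<sigma>\<in>perms n. \<chi> \<sigma> * \<chi> \<sigma> = 1) \<and>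
     (\<forall>\<sigma>\<in>perms n. \<forall>\<tau>\<in>perms n. \<chi> (\<sigma> \<circ> \<tau>) = \<chi> \<sigma> * \<chi> \<tau>)"

lemma sign_character_one: "sign_character n (\<lambda>_. 1)"
  unfolding sign_character_def by simp

lemma sign_character_sign: "sign_character n (\<lambda>\<sigma>. of_int (sign \<sigma>))"
  unfolding sign_character_def perms_def
  by (auto simp flip: of_int_mult intro!: arg_cong[where f = of_int] sign_compose
      intro: permutes_imp_permutation[OF finite_atLeastAtMost])

lemma card_stab_image:
  assumes \<pi>: "\<pi> \<in> perms n" and X: "X \<subseteq> edges n"
  shows "card (stab n (edge_act \<pi> ` X)) = card (stab n X)"
proof -
  have conj_in_perms: "\<alpha> \<circ> \<tau> \<circ> \<beta> \<in> perms n" if "\<alpha> \<in> perms n" "\<tau> \<in> perms n" "\<beta> \<in> perms n" for \<alpha> \<tau> \<beta>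
    using that by (simp add: perms_compose)
  have image_conj: "edge_act (\<alpha> \<circ> \<tau> \<circ> \<beta>) ` Y = edge_act \<alpha> ` edge_act \<tau> ` edge_act \<beta> ` Y" for \<alpha> \<tau> \<beta> Y
    by (simp add: edge_act_comp image_comp)
  have "bij_betw (\<lambda>\<tau>. inv \<pi> \<circ> \<tau> \<circ> \<pi>) (stab n (edge_act \<pi> ` X)) (stab n X)"
  proof (rule bij_betw_byWitness[where f' = "\<lambda>\<tau>. \<pi> \<circ> \<tau> \<circ> inv \<pi>"])
    show "\<forall>\<tau>\<in>stab n (edge_act \<pi> ` X). \<pi> \<circ> (inv \<pi> \<circ> \<tau> \<circ> \<pi>) \<circ> inv \<pi> = \<tau>"
      and "\<forall>\<tau>\<in>stab n X. inv \<pi> \<circ> (\<pi> \<circ> \<tau> \<circ> inv \<pi>) \<circ> \<pi> = \<tau>"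
      using perms_inv_o[OF \<pi>] by (metis comp_assoc comp_id id_comp)+
    show "(\<lambda>\<tau>. inv \<pi> \<circ> \<tau> \<circ> \<pi>) ` stab n (edge_act \<pi> ` X) \<subseteq> stab n X"
    proof
      fix \<rho> assume "\<rho> \<in> (\<lambda>\<tau>. inv \<pi> \<circ> \<tau> \<circ> \<pi>) ` stab n (edge_act \<pi> ` X)"
      then obtain \<tau> where \<tau>: "\<tau> \<in> perms n" "edge_act \<tau> ` edge_act \<pi> ` X = edge_act \<pi> ` X"
        and \<rho>: "\<rho> = inv \<pi> \<circ> \<tau> \<circ> \<pi>"
        unfolding stab_def by blast
      have "edge_act \<rho> ` X = X"
        unfolding \<rho> image_conj \<tau>(2) by (rule edge_act_inv_image(1)[OF \<pi> X])
      then show "\<rho> \<in> stab n X"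
        unfolding stab_def \<rho> using conj_in_perms[OF perms_inv[OF \<pi>] \<tau>(1) \<pi>] by blast
    qed
    show "(\<lambda>\<tau>. \<pi> \<circ> \<tau> \<circ> inv \<pi>) ` stab n X \<subseteq> stab n (edge_act \<pi> ` X)"
    proof
      fix \<rho> assume "\<rho> \<in> (\<lambda>\<tau>. \<pi> \<circ> \<tau> \<circ> inv \<pi>) ` stab n X"
      then obtain \<tau> where \<tau>: "\<tau> \<in> perms n" "edge_act \<tau> ` X = X" and \<rho>: "\<rho> = \<pi> \<circ> \<tau> \<circ> inv \<pi>"
        unfolding stab_def by blast
      have "edge_act \<rho> ` edge_act \<pi> ` X = edge_act \<pi> ` X"
        unfolding \<rho> image_conj edge_act_inv_image(1)[OF \<pi> X] \<tau>(2) ..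
      then show "\<rho> \<in> stab n (edge_act \<pi> ` X)"
        unfolding stab_def \<rho> using conj_in_perms[OF \<pi> \<tau>(1) perms_inv[OF \<pi>]] by blast
    qed
  qed
  then show ?thesis by (rule bij_betw_same_card)
qed

lemma alpha_twisted_image:
  assumes \<chi>: "sign_character n \<chi>" and \<pi>: "\<pi> \<in> perms n" and X: "X \<subseteq> edges n"
  shows "alpha_twisted n \<chi> (edge_act \<pi> ` X) S = \<chi> \<pi> * act_sign \<pi> X * alpha_twisted n \<chi> X S"
proof -
  define F where "F \<sigma> = (if edge_act \<sigma> ` X = S then \<chi> \<sigma> * act_sign \<sigma> X else 0)" for \<sigma>
  define G where "G \<sigma> = (if edge_act \<sigma> ` edge_act \<pi> ` X = S
                         then \<chi> \<sigma> * act_sign \<sigma> (edge_act \<pi> ` X) else 0)" for \<sigma>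
  have \<chi>\<pi>: "\<chi> \<pi> * \<chi> \<pi> = 1" using \<chi> \<pi> by (simp add: sign_character_def)
  have "bij_betw (\<lambda>\<sigma>. \<sigma> \<circ> \<pi>) (perms n) (perms n)"
    by (rule bij_betw_byWitness[where f' = "\<lambda>\<sigma>. \<sigma> \<circ> inv \<pi>"])
      (use perms_inv_o[OF \<pi>] perms_compose[OF _ \<pi>] perms_compose[OF _ perms_inv[OF \<pi>]] in
        \<open>auto simp: comp_assoc\<close>)
  then have "sum F (perms n) = (\<Sum>\<sigma>\<in>perms n. F (\<sigma> \<circ> \<pi>))"
    by (rule sum.reindex_bij_betw[symmetric])
  also have "\<dots> = (\<Sum>\<sigma>\<in>perms n. \<chi> \<pi> * act_sign \<pi> X * G \<sigma>)"
  proof (rule sum.cong[OF refl])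
    fix \<sigma> assume \<sigma>: "\<sigma> \<in> perms n"
    have "\<chi> (\<sigma> \<circ> \<pi>) = \<chi> \<sigma> * \<chi> \<pi>" using \<chi> \<sigma> \<pi> by (simp add: sign_character_def)
    then show "F (\<sigma> \<circ> \<pi>) = \<chi> \<pi> * act_sign \<pi> X * G \<sigma>"
      unfolding F_def G_def act_sign_comp[OF \<sigma> \<pi> X] by (simp add: edge_act_comp image_comp)
  qed
  finally have "\<chi> \<pi> * act_sign \<pi> X * sum F (perms n) =
      (\<chi> \<pi> * \<chi> \<pi>) * (act_sign \<pi> X * act_sign \<pi> X) * sum G (perms n)"
    by (simp add: sum_distrib_left algebra_simps)
  then have "sum G (perms n) = \<chi> \<pi> * act_sign \<pi> X * sum F (perms n)"
    using \<chi>\<pi> by (simp add: act_sign_def)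
  then show ?thesis
    unfolding alpha_twisted_apply[OF X] alpha_twisted_apply[OF edge_act_subset[OF \<pi> X]]
      card_stab_image[OF \<pi> X] F_def G_def
    by simp
qed

section \<open>The Hodge star\<close>

definition complementary_characters :: "nat \<Rightarrow> ((nat \<Rightarrow> nat) \<Rightarrow> rat) \<Rightarrow> ((nat \<Rightarrow> nat) \<Rightarrow> rat) \<Rightarrow> bool" where
  "complementary_characters n \<chi> \<chi>' \<longleftrightarrow> sign_character n \<chi> \<and> sign_character n \<chi>' \<and>
     (\<forall>\<sigma>\<in>perms n. act_sign \<sigma> (edges n) = \<chi> \<sigma> * \<chi>' \<sigma>)"

lemma of_int_sign_power: "(of_int (sign \<sigma>) :: 'a::ring_1) ^ n = (if even n then 1 else of_int (sign \<sigma>))"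
  by (cases \<sigma> rule: sign_cases) simp_all

lemma complementary_characters_trivial: "even n \<Longrightarrow> complementary_characters n (\<lambda>_. 1) (\<lambda>_. 1)"
  unfolding complementary_characters_def
  by (simp add: sign_character_one act_sign_edges of_int_sign_power)

lemma complementary_characters_sign:
  "even n \<Longrightarrow> complementary_characters n (\<lambda>\<sigma>. of_int (sign \<sigma>)) (\<lambda>\<sigma>. of_int (sign \<sigma>))"
  unfolding complementary_characters_def
  by (simp add: sign_character_sign act_sign_edges of_int_sign_power flip: of_int_mult)

lemma complementary_characters_sign_trivial:
  "odd n \<Longrightarrow> complementary_characters n (\<lambda>\<sigma>. of_int (sign \<sigma>)) (\<lambda>_. 1)"
  unfolding complementary_characters_def
  by (simp add: sign_character_one sign_character_sign act_sign_edges of_int_sign_power)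

lemma crossing_sign_image:
  assumes \<chi>: "complementary_characters n \<chi> \<chi>'" and \<sigma>: "\<sigma> \<in> perms n" and R: "R \<subseteq> edges n"
  shows "crossing_sign n (edge_act \<sigma> ` R) * \<chi> \<sigma> * act_sign \<sigma> R =
    crossing_sign n R * \<chi>' \<sigma> * act_sign \<sigma> (edges n - R)"
proof -
  have "\<chi> \<sigma> * \<chi>' \<sigma> = act_sign \<sigma> R * act_sign \<sigma> (edges n - R) *
      crossing_sign n R * crossing_sign n (edge_act \<sigma> ` R)"
    using \<chi> \<sigma> act_sign_Diff[OF \<sigma> R] by (simp add: complementary_characters_def)
  moreover have "\<chi> \<sigma> * \<chi> \<sigma> = 1" "\<chi>' \<sigma> * \<chi>' \<sigma> = 1"
    using \<chi> \<sigma> by (simp_all add: complementary_characters_def sign_character_def)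
  moreover have "act_sign \<sigma> R * act_sign \<sigma> R = 1"
    "act_sign \<sigma> (edges n - R) * act_sign \<sigma> (edges n - R) = 1"
    "crossing_sign n R * crossing_sign n R = 1"
    "crossing_sign n (edge_act \<sigma> ` R) * crossing_sign n (edge_act \<sigma> ` R) = 1"
    by (simp_all add: act_sign_def crossing_sign_def)
  ultimately show ?thesis
    by algebra
qed

text \<open>Up to the signs \<open>\<kappa>\<close>, this is the Hodge star of the exterior algebra: \<open>\<mu>\<^bsub>T - S\<^esub> \<mapsto> \<kappa> S \<mu>\<^sub>S\<close>.\<close>

definition hodge :: "nat \<Rightarrow> (grph \<Rightarrow> rat) \<Rightarrow> ext \<Rightarrow> ext" where
  "hodge n \<kappa> v = (\<lambda>S. if S \<subseteq> edges n then \<kappa> S * v (edges n - S) else 0)"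

lemma lin_on_hodge: "lin_on A (hodge n \<kappa>)"
  unfolding lin_on_def hodge_def by (auto simp: fun_eq_iff algebra_simps)

lemma hodge_mult: "hodge n (\<lambda>S. c S * \<kappa> S) v S = c S * hodge n \<kappa> v S"
  unfolding hodge_def by simp

lemma hodge_hodge:
  assumes "\<And>S. S \<subseteq> edges n \<Longrightarrow> \<kappa>' S * \<kappa> (edges n - S) = 1"
    and "\<forall>S. v S \<noteq> 0 \<longrightarrow> S \<subseteq> edges n"
  shows "hodge n \<kappa>' (hodge n \<kappa> v) = v"
proof
  fix S
  show "hodge n \<kappa>' (hodge n \<kappa> v) S = v S"
    using assms by (cases "S \<subseteq> edges n") (auto simp: hodge_def double_diff mult.assoc[symmetric])
qed

lemma hodge_ext_deg:
  assumes "v \<in> ext_deg n r"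
  shows "hodge n \<kappa> v \<in> ext_deg n (card (edges n) - r)"
  unfolding ext_deg_def
proof (intro CollectI allI impI)
  fix S assume "hodge n \<kappa> v S \<noteq> 0"
  then have S: "S \<subseteq> edges n" and "v (edges n - S) \<noteq> 0"
    by (auto simp: hodge_def split: if_splits)
  then have "card (edges n - S) = r"
    using assms by (simp add: ext_deg_def)
  moreover have "card (edges n - S) = card (edges n) - card S"
    using S by (meson card_Diff_subset finite_edges finite_subset)
  moreover have "card S \<le> card (edges n)"
    using S by (rule card_mono[OF finite_edges])
  ultimately show "S \<subseteq> edges n \<and> card S = card (edges n) - r"
    using S by simp
qed

definition hodge_compatible ::
    "nat \<Rightarrow> ((nat \<Rightarrow> nat) \<Rightarrow> rat) \<Rightarrow> ((nat \<Rightarrow> nat) \<Rightarrow> rat) \<Rightarrow> (grph \<Rightarrow> rat) \<Rightarrow> bool" where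
  "hodge_compatible n \<chi> \<chi>' \<kappa> \<longleftrightarrow> (\<forall>\<sigma>\<in>perms n. \<forall>Y. Y \<subseteq> edges n \<longrightarrow>
     \<kappa> (edge_act \<sigma> ` Y) * \<chi> \<sigma> * act_sign \<sigma> (edges n - Y) = \<chi>' \<sigma> * act_sign \<sigma> Y * \<kappa> Y)"

lemma semi_invariant_hodge:
  assumes \<kappa>: "hodge_compatible n \<chi> \<chi>' \<kappa>" and v: "semi_invariant n \<chi> v"
  shows "semi_invariant n \<chi>' (hodge n \<kappa> v)"
  unfolding semi_invariant_def
proof (intro ballI allI impI)
  fix \<sigma> Y assume \<sigma>: "\<sigma> \<in> perms n" and Y: "Y \<subseteq> edges n"
  have "hodge n \<kappa> v (edge_act \<sigma> ` Y) = \<kappa> (edge_act \<sigma> ` Y) * v (edge_act \<sigma> ` (edges n - Y))"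
    unfolding hodge_def using edge_act_subset[OF \<sigma> Y] edge_act_image_Diff[OF \<sigma> Y] by simp
  also have "\<dots> = (\<kappa> (edge_act \<sigma> ` Y) * \<chi> \<sigma> * act_sign \<sigma> (edges n - Y)) * v (edges n - Y)"
    using v \<sigma> by (simp add: semi_invariant_def mult.assoc)
  also have "\<dots> = \<chi>' \<sigma> * act_sign \<sigma> Y * hodge n \<kappa> v Y"
    using \<kappa> \<sigma> Y by (simp add: hodge_compatible_def hodge_def)
  finally show "hodge n \<kappa> v (edge_act \<sigma> ` Y) = \<chi>' \<sigma> * act_sign \<sigma> Y * hodge n \<kappa> v Y" .
qed

lemma hodge_compatible_Diff:
  assumes \<chi>: "complementary_characters n \<chi> \<chi>'" and \<kappa>: "hodge_compatible n \<chi> \<chi>' \<kappa>"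
  shows "hodge_compatible n \<chi>' \<chi> (\<lambda>S. \<kappa> (edges n - S))"
  unfolding hodge_compatible_def
proof (intro ballI allI impI)
  fix \<sigma> X assume \<sigma>: "\<sigma> \<in> perms n" and X: "X \<subseteq> edges n"
  have "\<kappa> (edge_act \<sigma> ` (edges n - X)) * \<chi> \<sigma> * act_sign \<sigma> (edges n - (edges n - X)) =
      \<chi>' \<sigma> * act_sign \<sigma> (edges n - X) * \<kappa> (edges n - X)"
    using \<kappa> \<sigma> by (simp add: hodge_compatible_def)
  then have "\<kappa> (edges n - edge_act \<sigma> ` X) * \<chi> \<sigma> * act_sign \<sigma> X =
      \<chi>' \<sigma> * act_sign \<sigma> (edges n - X) * \<kappa> (edges n - X)"
    using X by (simp add: edge_act_image_Diff[OF \<sigma> X] double_diff)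
  moreover have "\<chi> \<sigma> * \<chi> \<sigma> = 1" "\<chi>' \<sigma> * \<chi>' \<sigma> = 1"
    using \<chi> \<sigma> by (simp_all add: complementary_characters_def sign_character_def)
  moreover have "act_sign \<sigma> X * act_sign \<sigma> X = 1"
    "act_sign \<sigma> (edges n - X) * act_sign \<sigma> (edges n - X) = 1"
    by (simp_all add: act_sign_def)
  ultimately show "\<kappa> (edges n - edge_act \<sigma> ` X) * \<chi>' \<sigma> * act_sign \<sigma> (edges n - X) =
      \<chi> \<sigma> * act_sign \<sigma> X * \<kappa> (edges n - X)"
    by algebra
qed

lemma hodge_compatible_crossing_sign:
  assumes "complementary_characters n \<chi> \<chi>'"
  shows "hodge_compatible n \<chi> \<chi>' (\<lambda>S. crossing_sign n (edges n - S))"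
  unfolding hodge_compatible_def
proof (intro ballI allI impI)
  fix \<sigma> Y assume \<sigma>: "\<sigma> \<in> perms n" and Y: "Y \<subseteq> edges n"
  show "crossing_sign n (edges n - edge_act \<sigma> ` Y) * \<chi> \<sigma> * act_sign \<sigma> (edges n - Y) =
      \<chi>' \<sigma> * act_sign \<sigma> Y * crossing_sign n (edges n - Y)"
    using crossing_sign_image[OF assms \<sigma>, of "edges n - Y"] Y
    by (simp add: edge_act_image_Diff[OF \<sigma> Y] double_diff mult.commute mult.left_commute)
qed

lemma hodge_compatible_mult:
  assumes "hodge_compatible n \<chi> \<chi>' \<kappa>"
    and "\<And>\<sigma> S. \<sigma> \<in> perms n \<Longrightarrow> S \<subseteq> edges n \<Longrightarrow> c (edge_act \<sigma> ` S) = c S"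
  shows "hodge_compatible n \<chi> \<chi>' (\<lambda>S. c S * \<kappa> S)"
  using assms unfolding hodge_compatible_def by (simp add: mult.assoc mult.left_commute)

lemma Diff_eq_Diff_iff: "A \<subseteq> T \<Longrightarrow> B \<subseteq> T \<Longrightarrow> T - A = T - B \<longleftrightarrow> A = B"
  by (metis double_diff order_refl)

lemma stab_Diff:
  assumes "R \<subseteq> edges n"
  shows "stab n (edges n - R) = stab n R"
proof -
  have "edge_act \<sigma> ` (edges n - R) = edges n - R \<longleftrightarrow> edge_act \<sigma> ` R = R" if \<sigma>: "\<sigma> \<in> perms n" for \<sigma>
    unfolding edge_act_image_Diff[OF \<sigma> assms]
    by (rule Diff_eq_Diff_iff[OF edge_act_subset[OF \<sigma> assms] assms])
  then show ?thesis
    unfolding stab_def by blast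
qed

lemma hodge_alpha_twisted:
  assumes \<chi>: "complementary_characters n \<chi> \<chi>'" and R: "R \<subseteq> edges n"
  shows "hodge n (\<lambda>S. crossing_sign n (edges n - S)) (alpha_twisted n \<chi> R) S =
    crossing_sign n R * alpha_twisted n \<chi>' (edges n - R) S"
proof (cases "S \<subseteq> edges n")
  case True
  let ?c = "1 / of_nat (card (stab n R)) :: rat"
  let ?f = "\<lambda>\<sigma>. if edge_act \<sigma> ` R = edges n - S then \<chi> \<sigma> * act_sign \<sigma> R else 0"
  let ?g = "\<lambda>\<sigma>. if edge_act \<sigma> ` (edges n - R) = S then \<chi>' \<sigma> * act_sign \<sigma> (edges n - R) else 0"
  have "crossing_sign n (edges n - S) * ?f \<sigma> = crossing_sign n R * ?g \<sigma>" if \<sigma>: "\<sigma> \<in> perms n" for \<sigma>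
  proof -
    have "edge_act \<sigma> ` (edges n - R) = S \<longleftrightarrow> edge_act \<sigma> ` R = edges n - S"
      using Diff_eq_Diff_iff[OF edge_act_subset[OF \<sigma> R] Diff_subset, of S] double_diff[OF True order_refl]
      by (simp add: edge_act_image_Diff[OF \<sigma> R])
    then show ?thesis
      using crossing_sign_image[OF \<chi> \<sigma> R] by (auto simp: mult.assoc)
  qed
  then have sums: "crossing_sign n (edges n - S) * sum ?f (perms n) = crossing_sign n R * sum ?g (perms n)"
    by (simp add: sum_distrib_left)
  have "hodge n (\<lambda>S. crossing_sign n (edges n - S)) (alpha_twisted n \<chi> R) S =
      ?c * (crossing_sign n (edges n - S) * sum ?f (perms n))"
    using True by (simp add: hodge_def alpha_twisted_apply[OF R])
  also have "\<dots> = ?c * (crossing_sign n R * sum ?g (perms n))"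
    by (simp only: sums)
  also have "\<dots> = crossing_sign n R * alpha_twisted n \<chi>' (edges n - R) S"
    by (simp add: alpha_twisted_apply[OF Diff_subset] stab_Diff[OF R])
  finally show ?thesis .
next
  case False
  then have "\<not> graph_iso n (edges n - R) S"
    using graph_iso_subset[of "edges n - R"] by blast
  then show ?thesis
    using False by (simp add: hodge_def alpha_twisted_eq_0)
qed

lemma graph_iso_complement_rep:
  assumes rep: "rep_choice n rep" and S: "S \<subseteq> edges n"
  shows "graph_iso n (edges n - rep (edges n - S)) (rep S)"
proof -
  have "graph_iso n (edges n - (edges n - S)) (edges n - rep (edges n - S))"
    using graph_iso_Diff rep_choice_iso[OF rep] by blast
  then have "graph_iso n (edges n - rep (edges n - S)) S"
    using graph_iso_sym S by (simp add: double_diff)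
  then show ?thesis
    using graph_iso_trans rep_choice_iso[OF rep S] by blast
qed

text \<open>On the isomorphism class of \<open>S\<close>, \<open>\<alpha>\<close> of \<open>rep S\<close> is \<open>rep_sign n \<chi> rep S\<close> times the
  image of \<open>\<alpha>\<close> of \<open>rep (T - S)\<close> under the Hodge star with signs \<open>crossing_sign n (T - _)\<close>.\<close>

definition rep_sign :: "nat \<Rightarrow> ((nat \<Rightarrow> nat) \<Rightarrow> rat) \<Rightarrow> (grph \<Rightarrow> grph) \<Rightarrow> grph \<Rightarrow> rat" where
  "rep_sign n \<chi> rep S =
    (let R = rep (edges n - S);
         \<pi> = (SOME \<pi>. \<pi> \<in> perms n \<and> edge_act \<pi> ` (edges n - R) = rep S)
     in \<chi> \<pi> * act_sign \<pi> (edges n - R) * crossing_sign n R)"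

lemma rep_sign_perm:
  assumes "rep_choice n rep" and "S \<subseteq> edges n"
  obtains \<pi> where "\<pi> \<in> perms n" "edge_act \<pi> ` (edges n - rep (edges n - S)) = rep S"
    "rep_sign n \<chi> rep S = \<chi> \<pi> * act_sign \<pi> (edges n - rep (edges n - S)) * crossing_sign n (rep (edges n - S))"
proof -
  let ?R = "rep (edges n - S)"
  define \<pi> where "\<pi> = (SOME \<pi>. \<pi> \<in> perms n \<and> edge_act \<pi> ` (edges n - ?R) = rep S)"
  have "\<exists>\<pi>. \<pi> \<in> perms n \<and> edge_act \<pi> ` (edges n - ?R) = rep S"
    using graph_iso_complement_rep[OF assms] unfolding graph_iso_def by blast
  then have "\<pi> \<in> perms n \<and> edge_act \<pi> ` (edges n - ?R) = rep S"
    unfolding \<pi>_def by (rule someI_ex)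
  then show ?thesis
    by (intro that[of \<pi>]) (simp_all add: rep_sign_def Let_def \<pi>_def)
qed

lemma rep_sign_square:
  assumes "rep_choice n rep" "sign_character n \<chi>" "S \<subseteq> edges n"
  shows "rep_sign n \<chi> rep S * rep_sign n \<chi> rep S = 1"
proof -
  obtain \<pi> where "\<pi> \<in> perms n"
    "rep_sign n \<chi> rep S = \<chi> \<pi> * act_sign \<pi> (edges n - rep (edges n - S)) * crossing_sign n (rep (edges n - S))"
    using rep_sign_perm[OF assms(1,3)] by blast
  with assms(2) show ?thesis
    by (simp add: sign_character_def act_sign_def crossing_sign_def algebra_simps)
qed

lemma rep_sign_image:
  assumes rep: "rep_choice n rep" and \<sigma>: "\<sigma> \<in> perms n" and S: "S \<subseteq> edges n"
  shows "rep_sign n \<chi> rep (edge_act \<sigma> ` S) = rep_sign n \<chi> rep S"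
proof -
  have "rep (edge_act \<sigma> ` S) = rep S"
    by (rule rep_choice_eq[OF rep S graph_iso_image[OF \<sigma>]])
  moreover have "rep (edges n - edge_act \<sigma> ` S) = rep (edges n - S)"
    unfolding edge_act_image_Diff[OF \<sigma> S, symmetric]
    by (rule rep_choice_eq[OF rep Diff_subset graph_iso_image[OF \<sigma>]])
  ultimately show ?thesis
    by (simp add: rep_sign_def)
qed

lemma hodge_alpha_rep:
  assumes \<chi>: "complementary_characters n \<chi> \<chi>'" and rep: "rep_choice n rep" and E: "E \<subseteq> edges n"
  shows "hodge n (\<lambda>S. rep_sign n \<chi>' rep S * crossing_sign n (edges n - S)) (alpha_twisted n \<chi> (rep E)) =
    alpha_twisted n \<chi>' (rep (edges n - E))"
proof -
  define R where "R = rep E"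
  define Q where "Q = rep (edges n - E)"
  have R: "R \<subseteq> edges n" and Q: "Q \<subseteq> edges n"
    unfolding R_def Q_def using rep_choice_subset[OF rep] E by blast+
  have TE_TR: "graph_iso n (edges n - E) (edges n - R)"
    unfolding R_def by (rule graph_iso_Diff[OF E rep_choice_iso[OF rep E]])
  have TR_Q: "graph_iso n (edges n - R) Q"
    unfolding Q_def
    by (rule graph_iso_trans[OF graph_iso_sym[OF Diff_subset TE_TR] rep_choice_iso[OF rep Diff_subset]])
  have hodge: "hodge n (\<lambda>S. rep_sign n \<chi>' rep S * crossing_sign n (edges n - S)) (alpha_twisted n \<chi> R) S =
      rep_sign n \<chi>' rep S * crossing_sign n R * alpha_twisted n \<chi>' (edges n - R) S" for S
    by (simp add: hodge_mult hodge_alpha_twisted[OF \<chi> R])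
  have "hodge n (\<lambda>S. rep_sign n \<chi>' rep S * crossing_sign n (edges n - S)) (alpha_twisted n \<chi> R) S =
      alpha_twisted n \<chi>' Q S" for S
  proof (cases "graph_iso n (edges n - R) S")
    case True
    then have S: "S \<subseteq> edges n" using graph_iso_subset by blast
    have "rep S = Q" "rep (edges n - S) = R"
      using rep_choice_complement[OF rep E True[unfolded R_def]] by (simp_all add: Q_def R_def)
    then obtain \<pi> where \<pi>: "\<pi> \<in> perms n" "edge_act \<pi> ` (edges n - R) = Q"
      and sign: "rep_sign n \<chi>' rep S = \<chi>' \<pi> * act_sign \<pi> (edges n - R) * crossing_sign n R"
      using rep_sign_perm[OF rep S, of \<chi>'] by metis
    have "sign_character n \<chi>'"
      using \<chi> by (simp add: complementary_characters_def)
    then have "alpha_twisted n \<chi>' Q S = \<chi>' \<pi> * act_sign \<pi> (edges n - R) * alpha_twisted n \<chi>' (edges n - R) S"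
      using alpha_twisted_image[OF _ \<pi>(1) Diff_subset[of "edges n" R], of \<chi>' S] \<pi>(2) by simp
    then show ?thesis
      unfolding hodge sign by (simp add: crossing_sign_def ac_simps)
  next
    case False
    then have "\<not> graph_iso n Q S"
      using graph_iso_trans[OF TR_Q] by blast
    then show ?thesis
      unfolding hodge using False R Q by (simp add: alpha_twisted_eq_0)
  qed
  then show ?thesis
    unfolding R_def Q_def by blast
qed

lemma semi_invariants_complement_duality:
  assumes \<chi>: "complementary_characters n \<chi> \<chi>'" and rep: "rep_choice n rep" and r: "r \<le> card (edges n)"
  shows "\<exists>f. lin_on (semi_invariants n \<chi> r) f \<and>
    bij_betw f (semi_invariants n \<chi> r) (semi_invariants n \<chi>' (card (edges n) - r)) \<and>
    (\<forall>E. E \<subseteq> edges n \<longrightarrow> f (alpha_twisted n \<chi> (rep E)) = alpha_twisted n \<chi>' (rep (edges n - E)))"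
proof -
  let ?A = "semi_invariants n \<chi> r" and ?B = "semi_invariants n \<chi>' (card (edges n) - r)"
  define \<kappa> where "\<kappa> S = rep_sign n \<chi>' rep S * crossing_sign n (edges n - S)" for S
  define \<kappa>' where "\<kappa>' S = \<kappa> (edges n - S)" for S
  have compatible: "hodge_compatible n \<chi> \<chi>' \<kappa>"
    unfolding \<kappa>_def
    by (rule hodge_compatible_mult[OF hodge_compatible_crossing_sign[OF \<chi>] rep_sign_image[OF rep]])
  have compatible': "hodge_compatible n \<chi>' \<chi> \<kappa>'"
    unfolding \<kappa>'_def by (rule hodge_compatible_Diff[OF \<chi> compatible])
  have square: "\<kappa> S * \<kappa> S = 1" if "S \<subseteq> edges n" for S
    using rep_sign_square[OF rep _ that, of \<chi>'] \<chi>
    by (simp add: \<kappa>_def complementary_characters_def crossing_sign_def ac_simps)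
  have "bij_betw (hodge n \<kappa>) ?A ?B"
  proof (rule bij_betw_byWitness[where f' = "hodge n \<kappa>'"])
    have inverse: "\<kappa>' S * \<kappa> (edges n - S) = 1" and inverse': "\<kappa> S * \<kappa>' (edges n - S) = 1"
      if "S \<subseteq> edges n" for S
      using square[OF Diff_subset] square[OF that] that by (simp_all add: \<kappa>'_def double_diff)
    show "\<forall>v\<in>?A. hodge n \<kappa>' (hodge n \<kappa> v) = v"
      by (auto simp: semi_invariants_def ext_deg_def intro!: hodge_hodge inverse)
    show "\<forall>w\<in>?B. hodge n \<kappa> (hodge n \<kappa>' w) = w"
      by (auto simp: semi_invariants_def ext_deg_def intro!: hodge_hodge inverse')
    show "hodge n \<kappa> ` ?A \<subseteq> ?B"
      using hodge_ext_deg semi_invariant_hodge[OF compatible] unfolding semi_invariants_def by blast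
    show "hodge n \<kappa>' ` ?B \<subseteq> ?A"
      using hodge_ext_deg[of _ n "card (edges n) - r" \<kappa>'] semi_invariant_hodge[OF compatible'] r
      unfolding semi_invariants_def by auto
  qed
  then show ?thesis
    using lin_on_hodge hodge_alpha_rep[OF \<chi> rep] unfolding \<kappa>_def by blast
qed

theorem theorem2p42:
  fixes n r :: nat and rep :: "grph \<Rightarrow> grph"
  assumes "n \<ge> 1" and "r \<le> n * (n - 1) div 2" and "rep_choice n rep"
  shows
   "(even n \<longrightarrow> (\<exists>f. lin_on (H n r) f \<and> bij_betw f (H n r) (H n (n * (n - 1) div 2 - r)) \<and>
       (\<forall>E. E \<subseteq> edges n \<and> card E = r \<and> invariant n E \<longrightarrow>
             f (alpha n (rep E)) = alpha n (rep (edges n - E))))) \<and>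
    (even n \<longrightarrow> (\<exists>f. lin_on (Hsgn n r) f \<and> bij_betw f (Hsgn n r) (Hsgn n (n * (n - 1) div 2 - r)) \<and>
       (\<forall>E. E \<subseteq> edges n \<and> card E = r \<and> skew_invariant n E \<longrightarrow>
             f (alpha_sgn n (rep E)) = alpha_sgn n (rep (edges n - E))))) \<and>
    (odd n \<longrightarrow> (\<exists>f. lin_on (Hsgn n r) f \<and> bij_betw f (Hsgn n r) (H n (n * (n - 1) div 2 - r)) \<and>
       (\<forall>E. E \<subseteq> edges n \<and> card E = r \<and> skew_invariant n E \<longrightarrow>
             f (alpha_sgn n (rep E)) = alpha n (rep (edges n - E)))))"
proof -
  have duality: "\<exists>f. lin_on (semi_invariants n \<chi> r) f \<and>
      bij_betw f (semi_invariants n \<chi> r) (semi_invariants n \<chi>' (n * (n - 1) div 2 - r)) \<and>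
      (\<forall>E. E \<subseteq> edges n \<and> P E \<longrightarrow> f (alpha_twisted n \<chi> (rep E)) = alpha_twisted n \<chi>' (rep (edges n - E)))"
    if "complementary_characters n \<chi> \<chi>'" for \<chi> \<chi>' P
    using semi_invariants_complement_duality[OF that assms(3), unfolded card_edges, OF assms(2)] by blast
  show ?thesis
    unfolding H_eq_semi_invariants Hsgn_eq_semi_invariants alpha_eq_alpha_twisted alpha_sgn_eq_alpha_twisted
    by (intro conjI impI duality complementary_characters_trivial complementary_characters_sign
        complementary_characters_sign_trivial)
qed

end
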